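(* Let $d \ge 1$ and let $\beta=(\beta_1,\ldots,\beta_{d+1})$ be an optimal solution of the problem of minimizing $\beta_1\cdots\beta_d$ over all $(\beta_1,\dots,\beta_{d+1}) \in \mathbb{R}^{d+1}$ satisfying $\beta_1 \ge \cdots \ge \beta_{d+1} \ge 0$, $\beta_1+\cdots+\beta_{d+1}=1$, and, for every $t \in \{1,\dots,d\}$, \[ \mathrm{PS}(t):\quad \prod_{i=1}^t (\beta_i - \beta_{d+1}) \le \sum_{j=t+1}^{d+1} (\beta_j - \beta_{d+1}) + (d+1)\beta_{d+1}. \] Then there exists $\ell \in \{0,\ldots,d\}$ such that (a) $\beta_t = \beta_{t+1}$ for every $t$ with $\ell+1 \le t \le d$, and (b) $\mathrm{PS}(t)$ holds with equality for every $t$ with $1 \le t \le \ell-1$. *)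

theory Defs
  imports Complex_Main
begin

text \<open>Vectors in R^(d+1) are represented as functions nat => real; only the
  values at indices 1..d+1 matter.\<close>

definition PS :: "nat \<Rightarrow> (nat \<Rightarrow> real) \<Rightarrow> nat \<Rightarrow> bool" where
  "PS d \<beta> t \<longleftrightarrow>
     (\<Prod>i=1..t. \<beta> i - \<beta> (d+1))
       \<le> (\<Sum>j=t+1..d+1. \<beta> j - \<beta> (d+1)) + real (d+1) * \<beta> (d+1)"

definition feasible :: "nat \<Rightarrow> (nat \<Rightarrow> real) \<Rightarrow> bool" where
  "feasible d \<beta> \<longleftrightarrow>
     (\<forall>i\<in>{1..d}. \<beta> i \<ge> \<beta> (i+1)) \<and> \<beta> (d+1) \<ge> 0 \<and>
     (\<Sum>i=1..d+1. \<beta> i) = 1 \<and>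
     (\<forall>t\<in>{1..d}. PS d \<beta> t)"

definition optimal :: "nat \<Rightarrow> (nat \<Rightarrow> real) \<Rightarrow> bool" where
  "optimal d \<beta> \<longleftrightarrow> feasible d \<beta> \<and>
     (\<forall>\<gamma>. feasible d \<gamma> \<longrightarrow> (\<Prod>i=1..d. \<beta> i) \<le> (\<Prod>i=1..d. \<gamma> i))"

end

(*
  Write alpha_i = beta_i - beta_(d+1). Under the normalisation sum beta = 1, PS(s) says that
  G(s) = prod_(i<=s) alpha_i + sum_(i<=s) alpha_i is at most 1. Let l be the last index
  <= d with beta_l > beta_(d+1); beyond it the vector is constant, which is (a). For (b),
  suppose PS(t) is slack for some t < l. Let p be the first index of the block of entries
  equal to beta_t and q the last index (<= d) of the block equal to beta_(t+1). On a block
  of equal entries G is discretely convex, so the slack at t spreads to every s with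
  p <= s < q. Moving a small mass e from beta_q to beta_p keeps the vector sorted and
  normalised, leaves G(s) unchanged for s < p, does not increase it for s >= q, and keeps
  the slack constraints valid; but it strictly decreases beta_1 ... beta_d, contradicting
  optimality.
*)
theory Submission
  imports Defs
begin

definition ps_gauge :: "(nat \<Rightarrow> real) \<Rightarrow> nat \<Rightarrow> real" where
  "ps_gauge a s = (\<Prod>i=1..s. a i) + (\<Sum>i=1..s. a i)"

lemma PS_rhs_eq:
  assumes "(\<Sum>i=1..d+1. x i) = 1" "s \<le> d"
  shows "(\<Sum>j=s+1..d+1. x j - x (d+1)) + real (d+1) * x (d+1) = 1 - (\<Sum>i=1..s. x i - x (d+1))"
proof -
  have "(\<Sum>i=1..d+1. x i - x (d+1)) = 1 - real (d+1) * x (d+1)"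
    using assms(1) by (simp add: sum_subtractf)
  moreover have "(\<Sum>i=1..d+1. x i - x (d+1))
      = (\<Sum>i=1..s. x i - x (d+1)) + (\<Sum>i=s+1..d+1. x i - x (d+1))"
    using sum.ub_add_nat[of 1 s "\<lambda>i. x i - x (d+1)" "d+1-s"] assms(2) by simp
  ultimately show ?thesis by linarith
qed

lemma PS_iff_ps_gauge_le_1:
  assumes "(\<Sum>i=1..d+1. x i) = 1" "s \<le> d"
  shows "PS d x s \<longleftrightarrow> ps_gauge (\<lambda>i. x i - x (d+1)) s \<le> 1"
  using PS_rhs_eq[OF assms] unfolding PS_def ps_gauge_def by linarith

lemma feasible_antimono:
  assumes "feasible d \<beta>" "1 \<le> i" "i \<le> j" "j \<le> d+1"
  shows "\<beta> j \<le> \<beta> i"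
  using assms(3,4)
proof (induction j rule: dec_induct)
  case (step n)
  then have "\<beta> (n+1) \<le> \<beta> n" using assms(1,2) by (simp add: feasible_def)
  then show ?case using step by simp
qed simp

lemma feasible_ps_gauge_le_1:
  assumes "feasible d \<beta>" "s \<le> d"
  shows "ps_gauge (\<lambda>i. \<beta> i - \<beta> (d+1)) s \<le> 1"
  using assms PS_iff_ps_gauge_le_1[where x=\<beta> and d=d and s=s]
  by (cases "s = 0") (auto simp: feasible_def ps_gauge_def)

lemma feasible_pos:
  assumes feas: "feasible d \<beta>" and i: "1 \<le> i" "i \<le> d"
  shows "\<beta> i > 0"
proof (rule ccontr)
  assume "\<not> \<beta> i > 0"
  have nonneg: "\<beta> j \<ge> 0" if "1 \<le> j" "j \<le> d+1" for j
    using feasible_antimono[OF feas that] feas by (simp add: feasible_def)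
  have last0: "\<beta> (d+1) = 0"
    using nonneg[of "d+1"] feasible_antimono[OF feas, of i "d+1"] i \<open>\<not> \<beta> i > 0\<close> by simp
  define J where "J = {j\<in>{1..d}. \<beta> j > 0}"
  define L where "L = Max J"
  have "J \<noteq> {}"
  proof
    assume "J = {}"
    then have "\<beta> j \<le> 0" if "j \<in> {1..d+1}" for j
      using that last0 by (cases "j = d+1") (auto simp: J_def not_less le_Suc_eq)
    then have "(\<Sum>j=1..d+1. \<beta> j) \<le> 0" by (rule sum_nonpos)
    then show False using feas by (simp add: feasible_def)
  qed
  then have L: "L \<in> J" and Lmax: "\<And>j. j \<in> J \<Longrightarrow> j \<le> L"
    using Max_in[of J] Max_ge[of J] unfolding L_def by (simp_all add: J_def)
  \<comment> \<open>PS at the last positive index says that a positive product is at most zero.\<close>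
  have "(\<Sum>j=L+1..d+1. \<beta> j - \<beta> (d+1)) = 0"
  proof (rule sum.neutral, intro ballI)
    fix j assume j: "j \<in> {L+1..d+1}"
    then have "j = d+1 \<or> j \<notin> J" using Lmax by force
    then show "\<beta> j - \<beta> (d+1) = 0" using j nonneg[of j] last0 L by (auto simp: J_def le_Suc_eq)
  qed
  moreover have "(\<Prod>j=1..L. \<beta> j - \<beta> (d+1)) > 0"
  proof (rule prod_pos)
    fix j assume "j \<in> {1..L}"
    then have "\<beta> L \<le> \<beta> j" using feasible_antimono[OF feas, of j L] L by (auto simp: J_def)
    then show "\<beta> j - \<beta> (d+1) > 0" using L last0 by (auto simp: J_def)
  qed
  moreover have "PS d \<beta> L" using feas L by (simp add: feasible_def J_def)
  ultimately show False using last0 by (simp add: PS_def)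
qed

definition shift_mass :: "nat \<Rightarrow> nat \<Rightarrow> real \<Rightarrow> (nat \<Rightarrow> real) \<Rightarrow> nat \<Rightarrow> real" where
  "shift_mass p q e x i = x i + e * (of_bool (i = p) - of_bool (i = q))"

lemma shift_mass_0 [simp]: "shift_mass p q 0 x = x"
  by (simp add: shift_mass_def fun_eq_iff)

lemma sum_shift_mass:
  assumes "finite A"
  shows "sum (shift_mass p q e x) A = sum x A + e * (of_bool (p \<in> A) - of_bool (q \<in> A))"
  using assms by (simp add: shift_mass_def sum.distrib sum_subtractf flip: sum_distrib_left)

lemma prod_shift_mass:
  assumes "finite A" "p \<in> A" "q \<in> A" "p \<noteq> q"
  shows "prod (shift_mass p q e x) A = prod x A - e * (x p - x q + e) * prod x (A - {p, q})"
proof -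
  have split: "prod f A = f p * f q * prod f (A - {p, q})" for f :: "nat \<Rightarrow> real"
    using assms by (simp add: prod.remove[of A p] prod.remove[of "A - {p}" q] insert_Diff_if
      Diff_insert2[symmetric] mult.assoc)
  have "prod (shift_mass p q e x) (A - {p, q}) = prod x (A - {p, q})"
    by (rule prod.cong) (auto simp: shift_mass_def)
  then show ?thesis
    using split[of "shift_mass p q e x"] split[of x] assms(4)
    by (simp add: shift_mass_def algebra_simps)
qed

lemma convex_seq_lt_interior:
  fixes g :: "nat \<Rightarrow> real"
  assumes convex: "\<And>i. a \<le> i \<Longrightarrow> i + 2 \<le> b \<Longrightarrow> g (i+1) - g i \<le> g (i+2) - g (i+1)"
    and le: "\<And>s. a \<le> s \<Longrightarrow> s \<le> b \<Longrightarrow> g s \<le> y"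
    and t: "a \<le> t" "t \<le> b" "g t < y"
    and s: "a < s" "s < b"
  shows "g s < y"
proof (rule ccontr)
  assume "\<not> g s < y"
  then have gs: "g s = y" using le[of s] s by simp
  define D where "D i = g (i+1) - g i" for i
  have D_mono: "D i \<le> D j" if "a \<le> i" "i \<le> j" "j + 1 \<le> b" for i j
    using that(2,3)
  proof (induction j rule: dec_induct)
    case (step n)
    then show ?case using convex[of n] that(1) by (simp add: D_def)
  qed simp
  \<comment> \<open>A maximum at the interior point \<open>s\<close> forces \<open>D (s-1) \<ge> 0 \<ge> D s\<close>, so by
    convexity \<open>g\<close> is nonincreasing up to \<open>s\<close> and nondecreasing after it.\<close>
  have D_before: "D (s-1) \<ge> 0" using gs le[of "s-1"] s by (simp add: D_def)
  have D_after: "D s \<le> 0" using gs le[of "s+1"] s by (simp add: D_def)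
  have "g k \<ge> g s" if "s \<le> k" "k \<le> t" for k
    using that
  proof (induction k rule: dec_induct)
    case (step n)
    then have "D (s-1) \<le> D n" using D_mono[of "s-1" n] s t by simp
    then show ?case using step D_before by (simp add: D_def)
  qed simp
  moreover have "g k \<ge> g s" if "t \<le> k" "k \<le> s" for k
    using that(2)
  proof (induction rule: inc_induct)
    case (step n)
    then have "D n \<le> D s" using D_mono[of n s] s t that(1) by simp
    then show ?case using step D_after by (simp add: D_def)
  qed simp
  ultimately have "g t \<ge> g s" by (cases "s \<le> t") simp_all
  then show False using t gs by simp
qed

lemma ps_gauge_convex_on_const:
  assumes const: "\<And>j. r < j \<Longrightarrow> j \<le> i + 2 \<Longrightarrow> a j = v"
    and nonneg: "\<And>j. 1 \<le> j \<Longrightarrow> j \<le> i \<Longrightarrow> a j \<ge> 0"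
    and "r \<le> i"
  shows "ps_gauge a (i+1) - ps_gauge a i \<le> ps_gauge a (i+2) - ps_gauge a (i+1)"
proof -
  define P where "P = (\<Prod>j=1..i. a j)"
  define S where "S = (\<Sum>j=1..i. a j)"
  have "P \<ge> 0" unfolding P_def using nonneg by (intro prod_nonneg) simp
  then have "0 \<le> P * (v - 1)\<^sup>2" by simp
  moreover have "a (Suc i) = v" "a (Suc (Suc i)) = v" using const \<open>r \<le> i\<close> by simp_all
  then have "ps_gauge a i = P + S" "ps_gauge a (i+1) = v * P + v + S"
    "ps_gauge a (i+2) = v * (v * P) + v + (v + S)"
    by (simp_all add: ps_gauge_def P_def S_def prod.nat_ivl_Suc' sum.nat_ivl_Suc' numeral_2_eq_2)
  ultimately show ?thesis by (simp add: power2_eq_square algebra_simps)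
qed

lemma ps_gauge_lt_1_across_blocks:
  assumes nonneg: "\<And>i. 1 \<le> i \<Longrightarrow> i \<le> q \<Longrightarrow> a i \<ge> 0"
    and le: "\<And>s. s \<le> q \<Longrightarrow> ps_gauge a s \<le> 1"
    and lt: "ps_gauge a t < 1"
    and block_t: "\<And>i. p \<le> i \<Longrightarrow> i \<le> t \<Longrightarrow> a i = a t"
    and block_q: "\<And>i. t < i \<Longrightarrow> i \<le> q \<Longrightarrow> a i = a q"
    and s: "p \<le> s" "s < q" and "1 \<le> p" "t < q"
  shows "ps_gauge a s < 1"
proof -
  consider "s = t" | "s < t" | "t < s" by linarith
  then show ?thesis
  proof cases
    case 2
    show ?thesis
    proof (rule convex_seq_lt_interior[where g="ps_gauge a" and y=1 and a="p-1" and b=t and t=t])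
      fix i assume "p - 1 \<le> i" "i + 2 \<le> t"
      show "ps_gauge a (i+1) - ps_gauge a i \<le> ps_gauge a (i+2) - ps_gauge a (i+1)"
      proof (rule ps_gauge_convex_on_const[where r="p-1" and v="a t"])
        fix j assume "p - 1 < j" "j \<le> i + 2"
        then show "a j = a t" using \<open>i + 2 \<le> t\<close> by (intro block_t) simp_all
      qed (use nonneg \<open>p - 1 \<le> i\<close> \<open>i + 2 \<le> t\<close> \<open>t < q\<close> in simp_all)
    next
      fix s' assume "p - 1 \<le> s'" "s' \<le> t"
      then show "ps_gauge a s' \<le> 1" using le \<open>t < q\<close> by simp
    qed (use lt 2 s \<open>1 \<le> p\<close> in simp_all)
  next
    case 3
    show ?thesis
    proof (rule convex_seq_lt_interior[where g="ps_gauge a" and y=1 and a=t and b=q and t=t])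
      fix i assume "t \<le> i" "i + 2 \<le> q"
      show "ps_gauge a (i+1) - ps_gauge a i \<le> ps_gauge a (i+2) - ps_gauge a (i+1)"
      proof (rule ps_gauge_convex_on_const[where r=t and v="a q"])
        fix j assume "t < j" "j \<le> i + 2"
        then show "a j = a q" using \<open>i + 2 \<le> q\<close> by (intro block_q) simp_all
      qed (use nonneg \<open>t \<le> i\<close> \<open>i + 2 \<le> q\<close> in simp_all)
    next
      fix s' assume "t \<le> s'" "s' \<le> q"
      then show "ps_gauge a s' \<le> 1" using le by simp
    qed (use lt 3 s in simp_all)
  qed (use lt in simp)
qed

lemma antimono_block_start:
  fixes x :: "nat \<Rightarrow> real"
  assumes mono: "\<And>i j. 1 \<le> i \<Longrightarrow> i \<le> j \<Longrightarrow> j \<le> n \<Longrightarrow> x j \<le> x i"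
    and t: "1 \<le> t" "t \<le> n"
  obtains p where "1 \<le> p" "p \<le> t" "\<And>i. p \<le> i \<Longrightarrow> i \<le> t \<Longrightarrow> x i = x t"
    "p = 1 \<or> x p < x (p-1)"
proof -
  define P where "P = {i\<in>{1..t}. x i = x t}"
  define p where "p = Min P"
  have "finite P" "t \<in> P" using t by (simp_all add: P_def)
  then have p: "p \<in> P" and p_min: "\<And>i. i \<in> P \<Longrightarrow> p \<le> i"
    unfolding p_def using Min_in[of P] Min_le[of P] by blast+
  then have p1: "1 \<le> p" and pt: "p \<le> t" by (simp_all add: P_def)
  have block: "x i = x t" if "p \<le> i" "i \<le> t" for i
    using mono[of p i] mono[of i t] p that t by (auto simp: P_def)
  have "x p < x (p - 1)" if "p \<noteq> 1"
  proof -
    have "p - 1 \<notin> P"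
    proof
      assume "p - 1 \<in> P"
      then have "p \<le> p - 1" by (rule p_min)
      then show False using p1 by linarith
    qed
    moreover have "x p \<le> x (p - 1)"
      using mono[of "p - 1" p] p1 pt t that by simp
    ultimately show "x p < x (p - 1)" using p that by (auto simp: P_def)
  qed
  with p1 pt block that show thesis by blast
qed

lemma antimono_block_end:
  fixes x :: "nat \<Rightarrow> real"
  assumes mono: "\<And>i j. 1 \<le> i \<Longrightarrow> i \<le> j \<Longrightarrow> j \<le> n + 1 \<Longrightarrow> x j \<le> x i"
    and t: "1 \<le> t" "t \<le> n" and drop: "x (n+1) < x t"
  obtains q where "t \<le> q" "q \<le> n" "\<And>i. t \<le> i \<Longrightarrow> i \<le> q \<Longrightarrow> x i = x t"
    "x (q+1) < x q"
proof -
  define Q where "Q = {i\<in>{t..n}. x i = x t}"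
  define q where "q = Max Q"
  have "finite Q" "t \<in> Q" using t by (simp_all add: Q_def)
  then have q: "q \<in> Q" and q_max: "\<And>i. i \<in> Q \<Longrightarrow> i \<le> q"
    unfolding q_def using Max_in[of Q] Max_ge[of Q] by blast+
  then have tq: "t \<le> q" and qn: "q \<le> n" by (simp_all add: Q_def)
  have block: "x i = x t" if "t \<le> i" "i \<le> q" for i
    using mono[of t i] mono[of i q] q that t by (auto simp: Q_def)
  have "x (q + 1) < x q"
  proof (cases "q = n")
    case False
    then have "q + 1 \<notin> Q" using q_max by fastforce
    moreover have "x (q + 1) \<le> x q" using mono[of q "q + 1"] tq qn t by simp
    ultimately show ?thesis using q False by (auto simp: Q_def)
  qed (use drop q in \<open>simp add: Q_def\<close>)
  with tq qn block that show thesis by blast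
qed

lemma isCont_eventually_less_at_right:
  fixes f :: "real \<Rightarrow> real"
  assumes "isCont f 0" "f 0 < y"
  shows "\<forall>\<^sub>F e in at_right 0. f e < y"
  using assms by (metis continuous_at_imp_continuous_at_within continuous_within order_tendstoD(2))

lemma shift_mass_antimono_eventually:
  fixes x :: "nat \<Rightarrow> real"
  assumes "finite I"
    and anti: "\<And>i. i \<in> I \<Longrightarrow> x (i+1) \<le> x i"
    and starts: "\<And>i. i \<in> I \<Longrightarrow> x (i+1) = x i \<Longrightarrow> i + 1 \<noteq> p"
    and ends: "\<And>i. i \<in> I \<Longrightarrow> x (i+1) = x i \<Longrightarrow> i \<noteq> q"
  shows "\<forall>\<^sub>F e in at_right 0. \<forall>i\<in>I. shift_mass p q e x (i+1) \<le> shift_mass p q e x i"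
proof (rule eventually_ball_finite[OF assms(1)], intro ballI)
  fix i assume i: "i \<in> I"
  show "\<forall>\<^sub>F e in at_right 0. shift_mass p q e x (i+1) \<le> shift_mass p q e x i"
  proof (cases "x (i+1) = x i")
    case True
    then have "of_bool (i+1 = p) - of_bool (i+1 = q) \<le> (of_bool (i = p) - of_bool (i = q) :: real)"
      using starts ends i by auto
    then have "shift_mass p q e x (i+1) \<le> shift_mass p q e x i" if "0 < e" for e
      using True that by (simp add: shift_mass_def mult_left_mono)
    then show ?thesis by (rule eventually_mono[OF eventually_at_right_less])
  next
    case False
    then have "shift_mass p q 0 x (i+1) - shift_mass p q 0 x i < 0"
      using anti[OF i] by simp
    then have "\<forall>\<^sub>F e in at_right 0. shift_mass p q e x (i+1) - shift_mass p q e x i < 0"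
      by (intro isCont_eventually_less_at_right) (simp_all add: shift_mass_def)
    then show ?thesis by (rule eventually_mono) simp
  qed
qed

lemma ps_gauge_shift_mass_below:
  assumes "s < p" "s < q"
  shows "ps_gauge (shift_mass p q e a) s = ps_gauge a s"
  unfolding ps_gauge_def using assms
  by (intro arg_cong2[where f="(+)"] prod.cong sum.cong) (auto simp: shift_mass_def)

lemma ps_gauge_shift_mass_above:
  assumes "1 \<le> p" "p \<noteq> q" "p \<le> s" "1 \<le> q" "q \<le> s"
  shows "ps_gauge (shift_mass p q e a) s
    = ps_gauge a s - e * (a p - a q + e) * (\<Prod>i\<in>{1..s} - {p, q}. a i)"
  using assms by (simp add: ps_gauge_def sum_shift_mass prod_shift_mass)

lemma ps_gauge_shift_mass_le_1_eventually:
  fixes a :: "nat \<Rightarrow> real"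
  assumes nonneg: "\<And>i. 1 \<le> i \<Longrightarrow> i \<le> n \<Longrightarrow> 0 \<le> a i"
    and le: "\<And>s. s \<le> n \<Longrightarrow> ps_gauge a s \<le> 1"
    and lt: "\<And>s. p \<le> s \<Longrightarrow> s < q \<Longrightarrow> ps_gauge a s < 1"
    and pq: "1 \<le> p" "p < q" and "a q \<le> a p"
  shows "\<forall>\<^sub>F e in at_right 0. \<forall>s\<in>{1..n}. ps_gauge (shift_mass p q e a) s \<le> 1"
proof (rule eventually_ball_finite, simp, intro ballI)
  fix s assume s: "s \<in> {1..n}"
  consider "s < p" | "p \<le> s" "s < q" | "q \<le> s" by linarith
  then show "\<forall>\<^sub>F e in at_right 0. ps_gauge (shift_mass p q e a) s \<le> 1"
  proof cases
    case 1
    then show ?thesis using le s pq by (simp add: ps_gauge_shift_mass_below)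
  next
    case 2
    have "isCont (\<lambda>e. ps_gauge (shift_mass p q e a) s) 0"
      unfolding ps_gauge_def shift_mass_def by (intro continuous_intros)
    then have "\<forall>\<^sub>F e in at_right 0. ps_gauge (shift_mass p q e a) s < 1"
      using lt[OF 2] by (intro isCont_eventually_less_at_right) simp_all
    then show ?thesis by (rule eventually_mono) simp
  next
    case 3
    have "ps_gauge (shift_mass p q e a) s \<le> 1" if "0 < e" for e
    proof -
      have "0 \<le> (\<Prod>i\<in>{1..s} - {p, q}. a i)" using nonneg s by (intro prod_nonneg) auto
      then have "0 \<le> e * (a p - a q + e) * (\<Prod>i\<in>{1..s} - {p, q}. a i)"
        using that \<open>a q \<le> a p\<close> by simp
      then show ?thesis using le[of s] s 3 pq by (simp add: ps_gauge_shift_mass_above)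
    qed
    then show ?thesis by (rule eventually_mono[OF eventually_at_right_less])
  qed
qed

lemma feasible_shift_mass_eventually:
  assumes feas: "feasible d \<beta>"
    and pq: "1 \<le> p" "p < q" "q \<le> d"
    and p_start: "p = 1 \<or> \<beta> p < \<beta> (p-1)" and q_end: "\<beta> (q+1) < \<beta> q"
    and strict: "\<And>s. p \<le> s \<Longrightarrow> s < q \<Longrightarrow> ps_gauge (\<lambda>i. \<beta> i - \<beta> (d+1)) s < 1"
  shows "\<forall>\<^sub>F e in at_right 0. feasible d (shift_mass p q e \<beta>)"
proof -
  define \<alpha> where "\<alpha> = (\<lambda>i. \<beta> i - \<beta> (d+1))"
  have mono: "\<And>i j. 1 \<le> i \<Longrightarrow> i \<le> j \<Longrightarrow> j \<le> d+1 \<Longrightarrow> \<beta> j \<le> \<beta> i"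
    using feasible_antimono[OF feas] by blast
  have sum1: "(\<Sum>i=1..d+1. \<beta> i) = 1" using feas by (simp add: feasible_def)
  have last: "shift_mass p q e \<beta> (d+1) = \<beta> (d+1)" for e
    using pq by (auto simp: shift_mass_def)
  have shifted: "(\<lambda>i. shift_mass p q e \<beta> i - shift_mass p q e \<beta> (d+1)) = shift_mass p q e \<alpha>" for e
    unfolding last by (simp add: fun_eq_iff shift_mass_def \<alpha>_def)
  have "\<forall>\<^sub>F e in at_right 0. \<forall>i\<in>{1..d}. shift_mass p q e \<beta> (i+1) \<le> shift_mass p q e \<beta> i"
  proof (rule shift_mass_antimono_eventually)
    show "\<beta> (i+1) \<le> \<beta> i" if "i \<in> {1..d}" for i using mono that by simp
    show "i + 1 \<noteq> p" if "i \<in> {1..d}" "\<beta> (i+1) = \<beta> i" for i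
      using p_start that by auto
    show "i \<noteq> q" if "i \<in> {1..d}" "\<beta> (i+1) = \<beta> i" for i
      using q_end that by auto
  qed simp
  moreover have "\<forall>\<^sub>F e in at_right 0. \<forall>s\<in>{1..d}. ps_gauge (shift_mass p q e \<alpha>) s \<le> 1"
  proof (rule ps_gauge_shift_mass_le_1_eventually)
    show "ps_gauge \<alpha> s \<le> 1" if "s \<le> d" for s
      using feasible_ps_gauge_le_1[OF feas that] by (simp add: \<alpha>_def)
    show "0 \<le> \<alpha> i" if "1 \<le> i" "i \<le> d" for i using mono that by (simp add: \<alpha>_def)
    show "ps_gauge \<alpha> s < 1" if "p \<le> s" "s < q" for s using strict that by (simp add: \<alpha>_def)
    show "\<alpha> q \<le> \<alpha> p" using mono pq by (simp add: \<alpha>_def)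
  qed (use pq in simp_all)
  ultimately show ?thesis
  proof (rule eventually_elim2)
    fix e
    assume anti: "\<forall>i\<in>{1..d}. shift_mass p q e \<beta> (i+1) \<le> shift_mass p q e \<beta> i"
      and gauge: "\<forall>s\<in>{1..d}. ps_gauge (shift_mass p q e \<alpha>) s \<le> 1"
    have sum_shifted: "(\<Sum>i=1..d+1. shift_mass p q e \<beta> i) = 1"
      using sum_shift_mass[of "{1..d+1}" p q e \<beta>] sum1 pq by simp
    have "PS d (shift_mass p q e \<beta>) s" if "s \<in> {1..d}" for s
      using gauge that PS_iff_ps_gauge_le_1[OF sum_shifted, of s] unfolding shifted by simp
    then show "feasible d (shift_mass p q e \<beta>)"
      using anti sum_shifted last feas by (simp add: feasible_def)
  qed
qed

lemma feasible_shift_mass_decreases_prod: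
  assumes feas: "feasible d \<beta>"
    and pq: "1 \<le> p" "p < q" "q \<le> d"
    and p_start: "p = 1 \<or> \<beta> p < \<beta> (p-1)" and q_end: "\<beta> (q+1) < \<beta> q"
    and strict: "\<And>s. p \<le> s \<Longrightarrow> s < q \<Longrightarrow> ps_gauge (\<lambda>i. \<beta> i - \<beta> (d+1)) s < 1"
  obtains \<gamma> where "feasible d \<gamma>" "(\<Prod>i=1..d. \<gamma> i) < (\<Prod>i=1..d. \<beta> i)"
proof -
  have "\<forall>\<^sub>F e in at_right 0. 0 < e \<and> feasible d (shift_mass p q e \<beta>)"
    using eventually_at_right_less feasible_shift_mass_eventually[OF assms]
    by (rule eventually_conj)
  then obtain e where e: "0 < e" and feas_e: "feasible d (shift_mass p q e \<beta>)"
    using eventually_happens'[OF trivial_limit_at_right_real] by blast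
  have "0 < (\<Prod>i\<in>{1..d} - {p, q}. \<beta> i)"
    by (rule prod_pos) (use feasible_pos[OF feas] in auto)
  moreover have "\<beta> q \<le> \<beta> p" using feasible_antimono[OF feas] pq by simp
  ultimately have "(\<Prod>i=1..d. shift_mass p q e \<beta> i) < (\<Prod>i=1..d. \<beta> i)"
    using e pq by (simp add: prod_shift_mass)
  with feas_e that show thesis by blast
qed

lemma optimal_PS_tight:
  assumes opt: "optimal d \<beta>" and t: "1 \<le> t" "t + 1 \<le> d" and drop: "\<beta> (d+1) < \<beta> (t+1)"
  shows "(\<Prod>i=1..t. \<beta> i - \<beta> (d+1))
    = (\<Sum>j=t+1..d+1. \<beta> j - \<beta> (d+1)) + real (d+1) * \<beta> (d+1)"
proof (rule ccontr)
  assume not_tight: "\<not> ?thesis"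
  define \<alpha> where "\<alpha> = (\<lambda>i. \<beta> i - \<beta> (d+1))"
  have feas: "feasible d \<beta>" using opt by (simp add: optimal_def)
  have sum1: "(\<Sum>i=1..d+1. \<beta> i) = 1" using feas by (simp add: feasible_def)
  have mono: "\<And>i j. 1 \<le> i \<Longrightarrow> i \<le> j \<Longrightarrow> j \<le> d+1 \<Longrightarrow> \<beta> j \<le> \<beta> i"
    using feasible_antimono[OF feas] by blast
  have gauge_le: "ps_gauge \<alpha> s \<le> 1" if "s \<le> d" for s
    using feasible_ps_gauge_le_1[OF feas that] by (simp add: \<alpha>_def)
  have "ps_gauge \<alpha> t \<noteq> 1"
    using not_tight PS_rhs_eq[OF sum1, of t] t by (auto simp: ps_gauge_def \<alpha>_def)
  then have gauge_lt: "ps_gauge \<alpha> t < 1" using gauge_le[of t] t by simp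
  have "t \<le> d + 1" using t by simp
  then obtain p where p: "1 \<le> p" "p \<le> t" and block_p: "\<And>i. p \<le> i \<Longrightarrow> i \<le> t \<Longrightarrow> \<beta> i = \<beta> t"
    and p_start: "p = 1 \<or> \<beta> p < \<beta> (p-1)"
    using antimono_block_start[of "d+1" \<beta> t, OF mono t(1)] by blast
  have "1 \<le> t + 1" by simp
  then obtain q where q: "t + 1 \<le> q" "q \<le> d" and block_q: "\<And>i. t + 1 \<le> i \<Longrightarrow> i \<le> q \<Longrightarrow> \<beta> i = \<beta> (t+1)"
    and q_end: "\<beta> (q+1) < \<beta> q"
    using antimono_block_end[of d \<beta> "t+1", OF mono _ t(2) drop] by blast
  have gauge_strict: "ps_gauge \<alpha> s < 1" if "p \<le> s" "s < q" for s
  proof (rule ps_gauge_lt_1_across_blocks[where p=p and q=q and t=t])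
    show "0 \<le> \<alpha> i" if "1 \<le> i" "i \<le> q" for i
      using mono[of i "d+1"] that q by (simp add: \<alpha>_def)
    show "\<alpha> i = \<alpha> t" if "p \<le> i" "i \<le> t" for i
      using block_p[OF that] by (simp add: \<alpha>_def)
    show "\<alpha> i = \<alpha> q" if "t < i" "i \<le> q" for i
      using block_q[of i] block_q[of q] that q by (simp add: \<alpha>_def)
  qed (use gauge_le gauge_lt that p q in simp_all)
  have "p < q" using p q by simp
  then obtain \<gamma> where "feasible d \<gamma>" "(\<Prod>i=1..d. \<gamma> i) < (\<Prod>i=1..d. \<beta> i)"
    using feasible_shift_mass_decreases_prod[OF feas p(1) _ q(2) p_start q_end] gauge_strict
    unfolding \<alpha>_def by blast
  then show False using opt by (auto simp: optimal_def not_le[symmetric])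
qed

theorem lemma3p1:
  fixes d :: nat and \<beta> :: "nat \<Rightarrow> real"
  assumes "d \<ge> 1" and "optimal d \<beta>"
  shows "\<exists>l\<in>{0..d}.
           (\<forall>t. l+1 \<le> t \<and> t \<le> d \<longrightarrow> \<beta> t = \<beta> (t+1)) \<and>
           (\<forall>t. 1 \<le> t \<and> t+1 \<le> l \<longrightarrow>
              (\<Prod>i=1..t. \<beta> i - \<beta> (d+1))
                = (\<Sum>j=t+1..d+1. \<beta> j - \<beta> (d+1)) + real (d+1) * \<beta> (d+1))"
proof -
  have feas: "feasible d \<beta>" using assms(2) by (simp add: optimal_def)
  have mono: "\<And>i j. 1 \<le> i \<Longrightarrow> i \<le> j \<Longrightarrow> j \<le> d+1 \<Longrightarrow> \<beta> j \<le> \<beta> i"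
    using feasible_antimono[OF feas] by blast
  define J where "J = {j\<in>{1..d}. \<beta> j > \<beta> (d+1)}"
  define l where "l = (if J = {} then 0 else Max J)"
  have J_le_l: "\<And>j. j \<in> J \<Longrightarrow> j \<le> l" by (auto simp: l_def J_def)
  have l_in_J: "l \<noteq> 0 \<Longrightarrow> l \<in> J" using Max_in[of J] by (auto simp: l_def J_def split: if_splits)
  have l_range: "l \<in> {0..d}" using l_in_J by (cases "l = 0") (auto simp: J_def)
  show ?thesis
  proof (rule bexI[OF _ l_range], intro conjI allI impI)
    fix t assume t: "l + 1 \<le> t \<and> t \<le> d"
    then have "\<beta> t \<le> \<beta> (d+1)" using J_le_l[of t] by (force simp: J_def)
    then show "\<beta> t = \<beta> (t+1)" using mono[of "t+1" "d+1"] mono[of t "t+1"] t by simp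
  next
    fix t assume t: "1 \<le> t \<and> t + 1 \<le> l"
    then have "\<beta> (d+1) < \<beta> (t+1)" using l_in_J mono[of "t+1" l] by (auto simp: J_def)
    then show "(\<Prod>i=1..t. \<beta> i - \<beta> (d+1))
        = (\<Sum>j=t+1..d+1. \<beta> j - \<beta> (d+1)) + real (d+1) * \<beta> (d+1)"
      using optimal_PS_tight[OF assms(2)] t l_range by simp
  qed
qed

end
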